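(* In the discrete setting of the context, let $\varphi$ be a twice continuously differentiable convex function on $(0,+\infty)$, let $(\rho_K^n)_{K\in\mathcal M,0\le n\le N}$ be positive, $\rho_\sigma^n$ face densities and $u_{K,\sigma}^n$ normal velocities, $F_{K,\sigma}^n=|\sigma|\rho_\sigma^nu_{K,\sigma}^n$, and define for $K\in\mathcal M$, $0\le n\le N-1$, \[ |K|\,R_K^{n+1}=\bigl(\varphi'(\rho_K^{n+1})-\varphi'(\rho_K^n)\bigr)\sum_{\sigma\in\mathcal{E}(K)}F_{K,\sigma}^n. \] Let $M>1$ and suppose $\rho_K^n\le M$, $1/\rho_K^n\le M$ and $|u_{K,\sigma}^n|\le M$ for all $K$, $\sigma\in\mathcal{E}(K)$, $0\le n\le N$. Let $|\varphi''|_\infty$ be the maximum of $\varphi''$ on $[1/M,M]$. Then \[ \|R\|_{L^1}:=\sum_{n=0}^{N-1}\delta t\sum_{K\in\mathcal M}|K|\,|R_K^{n+1}|\le M^2\,|\varphi''|_\infty\,\|\rho\|_{t,BV}\,\frac{\delta t}{\underline h_{\mathcal M}}. \]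
   Context: Setting: $\Omega\subset\mathbb{R}^d$ bounded, $\mathcal M$ a polytopal mesh with cells $K$, faces of $K$ denoted $\mathcal E(K)$, measures $|K|$, $|\sigma|$; uniform time step $\delta t$, times $t_n$, $0\le n\le N$. $\underline h_{\mathcal M}=\min_{K\in\mathcal M}|K|/\sum_{\sigma\in\mathcal{E}(K)}|\sigma|$. Time BV semi-norm: $\|z\|_{t,BV}=\sum_{n=0}^{N-1}\sum_{K\in\mathcal M}|K|\,|z_K^{n+1}-z_K^n|$. *)

theory Defs
  imports "HOL-Analysis.Analysis"
begin

definition h_low :: "'c set \<Rightarrow> ('c \<Rightarrow> 'f set) \<Rightarrow> ('c \<Rightarrow> real) \<Rightarrow> ('f \<Rightarrow> real) \<Rightarrow> real" where
  "h_low Mesh E vol area = Min ((\<lambda>K. vol K / (\<Sum>s\<in>E K. area s)) ` Mesh)"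

definition tBV :: "'c set \<Rightarrow> ('c \<Rightarrow> real) \<Rightarrow> nat \<Rightarrow> ('c \<Rightarrow> nat \<Rightarrow> real) \<Rightarrow> real" where
  "tBV Mesh vol N z = (\<Sum>n<N. \<Sum>K\<in>Mesh. vol K * \<bar>z K (Suc n) - z K n\<bar>)"

definition flux :: "('f \<Rightarrow> real) \<Rightarrow> ('f \<Rightarrow> nat \<Rightarrow> real) \<Rightarrow> ('c \<Rightarrow> 'f \<Rightarrow> nat \<Rightarrow> real) \<Rightarrow> 'c \<Rightarrow> 'f \<Rightarrow> nat \<Rightarrow> real" where
  "flux area rhos u K s n = area s * rhos s n * u K s n"

definition remR :: "('c \<Rightarrow> 'f set) \<Rightarrow> ('c \<Rightarrow> real) \<Rightarrow> ('f \<Rightarrow> real) \<Rightarrow> (real \<Rightarrow> real)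
   \<Rightarrow> ('c \<Rightarrow> nat \<Rightarrow> real) \<Rightarrow> ('f \<Rightarrow> nat \<Rightarrow> real) \<Rightarrow> ('c \<Rightarrow> 'f \<Rightarrow> nat \<Rightarrow> real) \<Rightarrow> 'c \<Rightarrow> nat \<Rightarrow> real" where
  "remR E vol area phi' rho rhos u K n =
     (phi' (rho K n) - phi' (rho K (n - 1))) * (\<Sum>s\<in>E K. flux area rhos u K s (n - 1)) / vol K"

end

theory Submission
  imports Defs
begin

text \<open>By the definition of the remainder, \<open>|K| |R_K^{n+1}|\<close> is the product of the increment of
  \<open>\<phi>'\<close> along the density and the total outgoing flux of \<open>K\<close>. The first factor is at most
  \<open>|\<phi>''|\<^sub>\<infinity> |\<rho>_K^{n+1} - \<rho>_K^n|\<close> by the mean value theorem (convexity makes \<open>\<phi>'\<close>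
  nondecreasing, so no lower bound on \<open>\<phi>''\<close> is needed); the second is at most
  \<open>M\<^sup>2 \<Sum>\<^sub>\<sigma> |\<sigma>| \<le> M\<^sup>2 |K| / h_low\<close>, since face densities lie between cell densities. Summing over
  cells and time steps yields the time BV semi-norm.\<close>

lemma convex_on_deriv_mono:
  fixes f f' :: "real \<Rightarrow> real"
  assumes convex: "convex_on A f" and "open A" "connected A"
    and deriv: "\<And>x. x \<in> A \<Longrightarrow> (f has_real_derivative f' x) (at x)"
    and a: "a \<in> A" and b: "b \<in> A" and "a \<le> b"
  shows "f' a \<le> f' b"
proof (cases "a = b")
  case False
  have tangent: "f y - f x \<ge> f' x * (y - x)" if "x \<in> A" "y \<in> A" for x y
    using convex_on_imp_above_tangent[OF convex \<open>connected A\<close> _ _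
        has_field_derivative_at_within[OF deriv]] that \<open>open A\<close>
    by (simp add: interior_open)
  have "f' a * (b - a) \<le> f' b * (b - a)"
    using tangent[OF a b] tangent[OF b a] by (simp add: algebra_simps)
  with False \<open>a \<le> b\<close> show ?thesis by simp
qed simp

lemma mono_on_lipschitz_by_deriv_bound:
  fixes g g' :: "real \<Rightarrow> real"
  assumes deriv: "\<And>x. x \<in> {lo..hi} \<Longrightarrow> (g has_real_derivative g' x) (at x)"
    and mono: "mono_on {lo..hi} g"
    and bound: "\<And>x. x \<in> {lo..hi} \<Longrightarrow> g' x \<le> L"
    and a: "a \<in> {lo..hi}" and b: "b \<in> {lo..hi}"
  shows "\<bar>g b - g a\<bar> \<le> L * \<bar>b - a\<bar>"
proof -
  have ordered: "\<bar>g y - g x\<bar> \<le> L * \<bar>y - x\<bar>"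
    if "x < y" "x \<in> {lo..hi}" "y \<in> {lo..hi}" for x y
  proof -
    have "(g has_real_derivative g' w) (at w)" if "x \<le> w" "w \<le> y" for w
      using deriv \<open>x \<in> {lo..hi}\<close> \<open>y \<in> {lo..hi}\<close> that by auto
    then obtain z where z: "x < z" "z < y" "g y - g x = (y - x) * g' z"
      using MVT2[OF \<open>x < y\<close>, of g g'] by blast
    have "g x \<le> g y"
      using mono_onD[OF mono] that by simp
    then have "\<bar>g y - g x\<bar> = (y - x) * g' z"
      using z(3) by simp
    also have "\<dots> \<le> (y - x) * L"
      using bound[of z] z that by (intro mult_left_mono) auto
    finally show ?thesis
      using \<open>x < y\<close> by (simp add: mult.commute)
  qed
  show ?thesis
    using ordered[OF _ a b] ordered[OF _ b a]
    by (cases a b rule: linorder_cases) (auto simp: abs_minus_commute)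
qed

lemma convex_deriv_lipschitz_on_Icc:
  fixes f f' f'' :: "real \<Rightarrow> real"
  assumes convex: "convex_on A f" and "open A" "connected A"
    and d1: "\<And>x. x \<in> A \<Longrightarrow> (f has_real_derivative f' x) (at x)"
    and d2: "\<And>x. x \<in> A \<Longrightarrow> (f' has_real_derivative f'' x) (at x)"
    and cont: "continuous_on A f''" and sub: "{lo..hi} \<subseteq> A"
    and a: "a \<in> {lo..hi}" and b: "b \<in> {lo..hi}"
  shows "\<bar>f' b - f' a\<bar> \<le> Sup (f'' ` {lo..hi}) * \<bar>b - a\<bar>"
proof (rule mono_on_lipschitz_by_deriv_bound[OF _ _ _ a b])
  have "bdd_above (f'' ` {lo..hi})"
    by (intro bounded_imp_bdd_above compact_imp_bounded compact_continuous_image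
        continuous_on_subset[OF cont sub]) simp
  then show "f'' x \<le> Sup (f'' ` {lo..hi})" if "x \<in> {lo..hi}" for x
    using that by (intro cSup_upper) auto
  show "mono_on {lo..hi} f'"
    using sub by (intro mono_onI convex_on_deriv_mono[OF convex \<open>open A\<close> \<open>connected A\<close> d1]) auto
qed (use d2 sub in auto)

lemma h_low_le:
  assumes "finite Mesh" and "K \<in> Mesh"
  shows "h_low Mesh E vol area \<le> vol K / (\<Sum>s\<in>E K. area s)"
  unfolding h_low_def using assms by (intro Min_le) auto

lemma h_low_pos:
  assumes "finite Mesh" and "Mesh \<noteq> {}"
    and "\<And>K. K \<in> Mesh \<Longrightarrow> vol K > 0" and "\<And>K. K \<in> Mesh \<Longrightarrow> (\<Sum>s\<in>E K. area s) > 0"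
  shows "h_low Mesh E vol area > 0"
  unfolding h_low_def using assms by (subst Min_gr_iff) auto

lemma sum_area_le_vol_div_h_low:
  assumes "finite Mesh" and "K \<in> Mesh"
    and "(\<Sum>s\<in>E K. area s) > 0" and "h_low Mesh E vol area > 0"
  shows "(\<Sum>s\<in>E K. area s) \<le> vol K / h_low Mesh E vol area"
  using h_low_le[OF assms(1,2), of E vol area] assms(3,4)
  by (simp add: pos_le_divide_eq mult.commute)

lemma abs_sum_flux_le:
  assumes "\<And>s. s \<in> E K \<Longrightarrow> area s \<ge> 0"
    and "\<And>s. s \<in> E K \<Longrightarrow> \<bar>rhos s n\<bar> \<le> M" and "\<And>s. s \<in> E K \<Longrightarrow> \<bar>u K s n\<bar> \<le> M"
  shows "\<bar>\<Sum>s\<in>E K. flux area rhos u K s n\<bar> \<le> M\<^sup>2 * (\<Sum>s\<in>E K. area s)"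
proof -
  have "\<bar>flux area rhos u K s n\<bar> \<le> area s * M\<^sup>2" if "s \<in> E K" for s
  proof -
    have "\<bar>rhos s n\<bar> * \<bar>u K s n\<bar> \<le> M * M"
      using assms(2,3)[OF that] by (intro mult_mono) auto
    then show ?thesis
      unfolding flux_def using assms(1)[OF that]
      by (simp add: abs_mult power2_eq_square mult.assoc mult_left_mono)
  qed
  then have "\<bar>\<Sum>s\<in>E K. flux area rhos u K s n\<bar> \<le> (\<Sum>s\<in>E K. area s * M\<^sup>2)"
    by (intro order.trans[OF sum_abs] sum_mono)
  then show ?thesis
    by (simp add: sum_distrib_right mult.commute)
qed

lemma vol_mul_abs_remR_le:
  assumes "vol K > 0"
    and "\<bar>phi' (rho K (Suc n)) - phi' (rho K n)\<bar> \<le> L * \<bar>rho K (Suc n) - rho K n\<bar>"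
    and "\<bar>\<Sum>s\<in>E K. flux area rhos u K s n\<bar> \<le> C * vol K"
  shows "vol K * \<bar>remR E vol area phi' rho rhos u K (Suc n)\<bar>
    \<le> L * C * (vol K * \<bar>rho K (Suc n) - rho K n\<bar>)"
proof -
  have "vol K * \<bar>remR E vol area phi' rho rhos u K (Suc n)\<bar>
      = \<bar>phi' (rho K (Suc n)) - phi' (rho K n)\<bar> * \<bar>\<Sum>s\<in>E K. flux area rhos u K s n\<bar>"
    unfolding remR_def using assms(1) by (simp add: abs_mult abs_divide)
  also have "\<dots> \<le> (L * \<bar>rho K (Suc n) - rho K n\<bar>) * (C * vol K)"
    using assms(2,3) by (intro mult_mono) auto
  finally show ?thesis
    by (simp add: mult_ac)
qed

lemma sum_time_cells_le_tBV:
  assumes "dt \<ge> 0"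
    and "\<And>K n. K \<in> Mesh \<Longrightarrow> n < N \<Longrightarrow> r K n \<le> C * (vol K * \<bar>z K (Suc n) - z K n\<bar>)"
  shows "(\<Sum>n<N. dt * (\<Sum>K\<in>Mesh. r K n)) \<le> C * tBV Mesh vol N z * dt"
proof -
  have "(\<Sum>n<N. dt * (\<Sum>K\<in>Mesh. r K n))
      \<le> (\<Sum>n<N. dt * (\<Sum>K\<in>Mesh. C * (vol K * \<bar>z K (Suc n) - z K n\<bar>)))"
    using assms by (intro sum_mono mult_left_mono) auto
  also have "\<dots> = C * tBV Mesh vol N z * dt"
    unfolding tBV_def by (simp add: sum_distrib_left sum_distrib_right mult_ac)
  finally show ?thesis .
qed

theorem lemma3p3:
  fixes Mesh :: "'c set" and E :: "'c \<Rightarrow> 'f set"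
    and vol :: "'c \<Rightarrow> real" and area :: "'f \<Rightarrow> real"
    and N :: nat and dt :: real
    and phi phi' phi'' :: "real \<Rightarrow> real"
    and rho :: "'c \<Rightarrow> nat \<Rightarrow> real" and rhos :: "'f \<Rightarrow> nat \<Rightarrow> real"
    and u :: "'c \<Rightarrow> 'f \<Rightarrow> nat \<Rightarrow> real" and M :: real
  assumes mesh_fin: "finite Mesh" and mesh_ne: "Mesh \<noteq> {}"
    and faces_fin: "\<And>K. K \<in> Mesh \<Longrightarrow> finite (E K)"
    and faces_ne: "\<And>K. K \<in> Mesh \<Longrightarrow> E K \<noteq> {}"
    and vol_pos: "\<And>K. K \<in> Mesh \<Longrightarrow> vol K > 0"
    and area_pos: "\<And>K s. K \<in> Mesh \<Longrightarrow> s \<in> E K \<Longrightarrow> area s > 0"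
    and dt_pos: "dt > 0"
    and d1: "\<And>x. x > 0 \<Longrightarrow> (phi has_real_derivative phi' x) (at x)"
    and d2: "\<And>x. x > 0 \<Longrightarrow> (phi' has_real_derivative phi'' x) (at x)"
    and c2: "continuous_on {0<..} phi''"
    and cvx: "convex_on {0<..} phi"
    and rho_pos: "\<And>K n. K \<in> Mesh \<Longrightarrow> n \<le> N \<Longrightarrow> rho K n > 0"
    and rhos_interp: "\<And>K s n. K \<in> Mesh \<Longrightarrow> s \<in> E K \<Longrightarrow> n \<le> N \<Longrightarrow>
        \<exists>K1\<in>Mesh. \<exists>K2\<in>Mesh. rho K1 n \<le> rhos s n \<and> rhos s n \<le> rho K2 n"
    and M_gt: "M > 1"
    and rho_le: "\<And>K n. K \<in> Mesh \<Longrightarrow> n \<le> N \<Longrightarrow> rho K n \<le> M"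
    and rho_inv_le: "\<And>K n. K \<in> Mesh \<Longrightarrow> n \<le> N \<Longrightarrow> 1 / rho K n \<le> M"
    and u_le: "\<And>K s n. K \<in> Mesh \<Longrightarrow> s \<in> E K \<Longrightarrow> n \<le> N \<Longrightarrow> \<bar>u K s n\<bar> \<le> M"
  shows "(\<Sum>n<N. dt * (\<Sum>K\<in>Mesh. vol K * \<bar>remR E vol area phi' rho rhos u K (Suc n)\<bar>))
     \<le> M\<^sup>2 * Sup (phi'' ` {1/M..M}) * tBV Mesh vol N rho * (dt / h_low Mesh E vol area)"
proof -
  define S where "S = Sup (phi'' ` {1/M..M})"
  let ?h = "h_low Mesh E vol area"
  have area_sum_pos: "(\<Sum>s\<in>E K. area s) > 0" if "K \<in> Mesh" for K
    using that faces_fin faces_ne area_pos by (intro sum_pos) auto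
  have h_pos: "?h > 0"
    using mesh_fin mesh_ne vol_pos area_sum_pos by (rule h_low_pos)
  have rho_range: "rho K n \<in> {1/M..M}" if "K \<in> Mesh" "n \<le> N" for K n
    using rho_inv_le[OF that] rho_pos[OF that] rho_le[OF that] M_gt
    by (simp add: divide_le_eq mult.commute)
  have rhos_bound: "\<bar>rhos s n\<bar> \<le> M" if "K \<in> Mesh" "s \<in> E K" "n \<le> N" for K s n
    using rhos_interp[OF that] rho_pos rho_le that(3) by force
  have "vol K * \<bar>remR E vol area phi' rho rhos u K (Suc n)\<bar>
      \<le> S * (M\<^sup>2 / ?h) * (vol K * \<bar>rho K (Suc n) - rho K n\<bar>)" if K: "K \<in> Mesh" and "n < N" for K n
  proof (rule vol_mul_abs_remR_le[where vol = vol and phi' = phi' and rho = rho and E = E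
        and area = area and rhos = rhos and u = u])
    show "vol K > 0"
      using vol_pos[OF K] .
    have "{1/M..M} \<subseteq> {0::real<..}"
      using M_gt by (auto intro: less_le_trans[of 0 "1/M"])
    then show "\<bar>phi' (rho K (Suc n)) - phi' (rho K n)\<bar> \<le> S * \<bar>rho K (Suc n) - rho K n\<bar>"
      unfolding S_def using rho_range[OF K] \<open>n < N\<close>
      by (intro convex_deriv_lipschitz_on_Icc[OF cvx _ _ d1 d2 c2]) (auto intro: convex_connected)
    have "\<bar>\<Sum>s\<in>E K. flux area rhos u K s n\<bar> \<le> M\<^sup>2 * (\<Sum>s\<in>E K. area s)"
      using area_pos[OF K] rhos_bound[OF K] u_le[OF K] \<open>n < N\<close>
      by (intro abs_sum_flux_le) (auto simp: less_imp_le)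
    also have "\<dots> \<le> M\<^sup>2 * (vol K / ?h)"
      using sum_area_le_vol_div_h_low[OF mesh_fin K area_sum_pos[OF K] h_pos]
      by (intro mult_left_mono) auto
    finally show "\<bar>\<Sum>s\<in>E K. flux area rhos u K s n\<bar> \<le> M\<^sup>2 / ?h * vol K"
      by simp
  qed
  then have "(\<Sum>n<N. dt * (\<Sum>K\<in>Mesh. vol K * \<bar>remR E vol area phi' rho rhos u K (Suc n)\<bar>))
      \<le> S * (M\<^sup>2 / ?h) * tBV Mesh vol N rho * dt"
    using dt_pos by (intro sum_time_cells_le_tBV) auto
  then show ?thesis
    unfolding S_def by (simp add: mult_ac)
qed

end
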